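(* Let $\alpha$ be a problem of QHC. Then (i) for every proposition $p$, $\nabla\alpha\Rightarrow\big((\alpha\to !p)\to !p\big)$; and (ii) if a problem $\beta$ satisfies $\beta\Rightarrow\big((\alpha\to !p)\to !p\big)$ for every proposition $p$, then $\beta\Rightarrow\nabla\alpha$.
   Context: QHC is a two-sorted first-order calculus. Its only terms are individual variables. Every formula is either a problem (denoted by Greek letters $\alpha,\beta,\gamma,\dots$) or a proposition (denoted by Latin letters $p,q,\dots$). Atomic formulas are proposition variables $p(t_1,\dots,t_n)$ (of proposition type), problem variables $\pi(t_1,\dots,t_n)$ (of problem type), and the constants $0$ (a proposition, classical falsity) and $\bot$ (a problem, intuitionistic absurdity). Propositions are closed under the classical connectives $\land,\lor,\to$ and quantifiers $\exists,\forall$; problems are closed under the intuitionistic connectives $\land,\lor,\to$ and quantifiers $\exists,\forall$ (the same symbols are used, distinguished by the type of the arguments). $\neg p$ abbreviates $p\to 0$, $\neg\alpha$ abbreviates $\alpha\to\bot$, and $\leftrightarrow$ is defined as usual. There are two type-conversion operators: if $p$ is a proposition then $!p$ is a problem, and if $\alpha$ is a problem then $?\alpha$ is a proposition. Deductive system of QHC: all axioms and rules of classical predicate logic applied to all propositions; all postulates and rules of intuitionistic predicate logic applied to all problems; the rules $p\,/\,!p$ and $\alpha\,/\,?\alpha$; and the schemas $?!p\to p$; $\alpha\to\, !?\alpha$; $!(p\to q)\to(!p\to !q)$; $?(\alpha\to\beta)\to(?\alpha\to ?\beta)$; $!0\to\bot$; $?(\alpha\land\beta)\leftrightarrow ?\alpha\land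 ?\beta$; $?(\alpha\lor\beta)\leftrightarrow ?\alpha\lor ?\beta$; $?\bot\to 0$; $?\exists x\,\alpha(x)\leftrightarrow\exists x\,?\alpha(x)$; $?\forall x\,\alpha(x)\to\forall x\,?\alpha(x)$ (usual variable side conditions implicit). $\vdash A$ means $A$ is derivable in QHC; $A\Rightarrow B$ means $\vdash A\to B$ and $A\Leftrightarrow B$ means $\vdash A\leftrightarrow B$ (with $A,B$ of the same type); $A\vdash B$ means $B$ is derivable in QHC from the premise $A$. Notation: $\Box p := ?!p$ (a proposition) and $\nabla\alpha := !?\alpha$ (a problem). QC and QH denote classical and intuitionistic predicate calculus. *)

theory Defs
  imports Main
begin

text \<open>Individual variables are de Bruijn indices (nat); terms are just variables.
  pform = propositions (classical sort), aform = problems (intuitionistic sort).\<close>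

datatype pform =
    PVar nat "nat list"
  | PZero
  | PAnd pform pform
  | POr pform pform
  | PImp pform pform
  | PEx pform                  \<comment> \<open>binds de Bruijn index 0\<close>
  | PAll pform
  | Q aform
and aform =
    AVar nat "nat list"
  | ABot
  | AAnd aform aform
  | AOr aform aform
  | AImp aform aform
  | AEx aform
  | AAll aform
  | Bang pform

definition ext :: "(nat \<Rightarrow> nat) \<Rightarrow> nat \<Rightarrow> nat" where
  "ext f = (\<lambda>i. case i of 0 \<Rightarrow> 0 | Suc j \<Rightarrow> Suc (f j))"

primrec renP :: "(nat \<Rightarrow> nat) \<Rightarrow> pform \<Rightarrow> pform"
and renA :: "(nat \<Rightarrow> nat) \<Rightarrow> aform \<Rightarrow> aform" where
  "renP f (PVar n ts) = PVar n (map f ts)"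
| "renP f PZero = PZero"
| "renP f (PAnd p q) = PAnd (renP f p) (renP f q)"
| "renP f (POr p q) = POr (renP f p) (renP f q)"
| "renP f (PImp p q) = PImp (renP f p) (renP f q)"
| "renP f (PEx p) = PEx (renP (ext f) p)"
| "renP f (PAll p) = PAll (renP (ext f) p)"
| "renP f (Q a) = Q (renA f a)"
| "renA f (AVar n ts) = AVar n (map f ts)"
| "renA f ABot = ABot"
| "renA f (AAnd a b) = AAnd (renA f a) (renA f b)"
| "renA f (AOr a b) = AOr (renA f a) (renA f b)"
| "renA f (AImp a b) = AImp (renA f a) (renA f b)"
| "renA f (AEx a) = AEx (renA (ext f) a)"
| "renA f (AAll a) = AAll (renA (ext f) a)"
| "renA f (Bang p) = Bang (renP f p)"

definition liftP :: "pform \<Rightarrow> pform" where "liftP = renP Suc"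
definition liftA :: "aform \<Rightarrow> aform" where "liftA = renA Suc"
definition inst :: "nat \<Rightarrow> nat \<Rightarrow> nat" where
  "inst t = (\<lambda>i. case i of 0 \<Rightarrow> t | Suc j \<Rightarrow> j)"
definition instP :: "nat \<Rightarrow> pform \<Rightarrow> pform" where "instP t = renP (inst t)"
definition instA :: "nat \<Rightarrow> aform \<Rightarrow> aform" where "instA t = renA (inst t)"

inductive derP :: "pform \<Rightarrow> bool" and derA :: "aform \<Rightarrow> bool" where
  P_K: "derP (PImp p (PImp q p))"
| P_S: "derP (PImp (PImp p (PImp q r)) (PImp (PImp p q) (PImp p r)))"
| P_conj1: "derP (PImp (PAnd p q) p)"
| P_conj2: "derP (PImp (PAnd p q) q)"
| P_conjI: "derP (PImp p (PImp q (PAnd p q)))"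
| P_disj1: "derP (PImp p (POr p q))"
| P_disj2: "derP (PImp q (POr p q))"
| P_disjE: "derP (PImp (PImp p r) (PImp (PImp q r) (PImp (POr p q) r)))"
| P_efq: "derP (PImp PZero p)"
| P_dne: "derP (PImp (PImp (PImp p PZero) PZero) p)"
| P_allE: "derP (PImp (PAll p) (instP t p))"
| P_exI: "derP (PImp (instP t p) (PEx p))"
| P_mp: "derP (PImp p q) \<Longrightarrow> derP p \<Longrightarrow> derP q"
| P_allI: "derP (PImp (liftP q) p) \<Longrightarrow> derP (PImp q (PAll p))"
| P_exE: "derP (PImp p (liftP q)) \<Longrightarrow> derP (PImp (PEx p) q)"
| A_K: "derA (AImp a (AImp b a))"
| A_S: "derA (AImp (AImp a (AImp b c)) (AImp (AImp a b) (AImp a c)))"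
| A_conj1: "derA (AImp (AAnd a b) a)"
| A_conj2: "derA (AImp (AAnd a b) b)"
| A_conjI: "derA (AImp a (AImp b (AAnd a b)))"
| A_disj1: "derA (AImp a (AOr a b))"
| A_disj2: "derA (AImp b (AOr a b))"
| A_disjE: "derA (AImp (AImp a c) (AImp (AImp b c) (AImp (AOr a b) c)))"
| A_efq: "derA (AImp ABot a)"
| A_allE: "derA (AImp (AAll a) (instA t a))"
| A_exI: "derA (AImp (instA t a) (AEx a))"
| A_mp: "derA (AImp a b) \<Longrightarrow> derA a \<Longrightarrow> derA b"
| A_allI: "derA (AImp (liftA b) a) \<Longrightarrow> derA (AImp b (AAll a))"
| A_exE: "derA (AImp a (liftA b)) \<Longrightarrow> derA (AImp (AEx a) b)"
| R_bang: "derP p \<Longrightarrow> derA (Bang p)"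
| R_quest: "derA a \<Longrightarrow> derP (Q a)"
| X_qb: "derP (PImp (Q (Bang p)) p)"
| X_bq: "derA (AImp a (Bang (Q a)))"
| X_bang_imp: "derA (AImp (Bang (PImp p q)) (AImp (Bang p) (Bang q)))"
| X_q_imp: "derP (PImp (Q (AImp a b)) (PImp (Q a) (Q b)))"
| X_bang_zero: "derA (AImp (Bang PZero) ABot)"
| X_q_and1: "derP (PImp (Q (AAnd a b)) (PAnd (Q a) (Q b)))"
| X_q_and2: "derP (PImp (PAnd (Q a) (Q b)) (Q (AAnd a b)))"
| X_q_or1: "derP (PImp (Q (AOr a b)) (POr (Q a) (Q b)))"
| X_q_or2: "derP (PImp (POr (Q a) (Q b)) (Q (AOr a b)))"
| X_q_bot: "derP (PImp (Q ABot) PZero)"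
| X_q_ex1: "derP (PImp (Q (AEx a)) (PEx (Q a)))"
| X_q_ex2: "derP (PImp (PEx (Q a)) (Q (AEx a)))"
| X_q_all: "derP (PImp (Q (AAll a)) (PAll (Q a)))"

definition nabla :: "aform \<Rightarrow> aform" where "nabla a = Bang (Q a)"

end

theory Submission
  imports Defs
begin

text \<open>\<nabla>\<alpha> is the strongest problem implying the continuation ((\<alpha> \<rightarrow> !p) \<rightarrow> !p) for all p.
  That it implies each continuation comes from pushing ?(\<alpha> \<rightarrow> !p) through ? and ! to get
  !?\<alpha> \<rightarrow> !p; maximality comes from instantiating p := ?\<alpha>, since \<alpha> \<rightarrow> !?\<alpha> is an axiom.\<close>

lemma derP_imp_concl_mono: "derP (PImp q r) \<Longrightarrow> derP (PImp (PImp p q) (PImp p r))"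
  by (meson P_mp P_K P_S)

lemma derP_imp_trans: "derP (PImp p q) \<Longrightarrow> derP (PImp q r) \<Longrightarrow> derP (PImp p r)"
  by (meson P_mp derP_imp_concl_mono)

lemma derA_imp_concl_mono: "derA (AImp b c) \<Longrightarrow> derA (AImp (AImp a b) (AImp a c))"
  by (meson A_mp A_K A_S)

lemma derA_imp_trans: "derA (AImp a b) \<Longrightarrow> derA (AImp b c) \<Longrightarrow> derA (AImp a c)"
  by (meson A_mp derA_imp_concl_mono)

lemma derA_imp_swap: "derA (AImp a (AImp b c)) \<Longrightarrow> derA (AImp b (AImp a c))"
  by (meson A_K A_S A_mp derA_imp_trans)

lemma derA_bang_mono: "derP (PImp p q) \<Longrightarrow> derA (AImp (Bang p) (Bang q))"
  by (meson A_mp X_bang_imp R_bang)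

lemma derP_quest_imp_bang: "derP (PImp (Q (AImp a (Bang p))) (PImp (Q a) p))"
  using derP_imp_trans[OF X_q_imp derP_imp_concl_mono[OF X_qb]] .

lemma derA_nabla_imp_cont:
  "derA (AImp (nabla a) (AImp (AImp a (Bang p)) (Bang p)))"
proof -
  have "derA (AImp (Bang (Q (AImp a (Bang p)))) (AImp (Bang (Q a)) (Bang p)))"
    using derA_imp_trans[OF derA_bang_mono[OF derP_quest_imp_bang] X_bang_imp] .
  then have "derA (AImp (AImp a (Bang p)) (AImp (nabla a) (Bang p)))"
    unfolding nabla_def using derA_imp_trans[OF X_bq] by blast
  then show ?thesis
    by (rule derA_imp_swap)
qed

lemma derA_imp_nabla_of_cont:
  assumes "derA (AImp b (AImp (AImp a (Bang (Q a))) (Bang (Q a))))"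
  shows "derA (AImp b (nabla a))"
  unfolding nabla_def using A_mp[OF derA_imp_swap[OF assms] X_bq] .

theorem corollary2p14:
  fixes \<alpha> :: aform
  shows "(\<forall>p. derA (AImp (nabla \<alpha>) (AImp (AImp \<alpha> (Bang p)) (Bang p))))
       \<and> (\<forall>\<beta>. (\<forall>p. derA (AImp \<beta> (AImp (AImp \<alpha> (Bang p)) (Bang p))))
               \<longrightarrow> derA (AImp \<beta> (nabla \<alpha>)))"
  using derA_nabla_imp_cont derA_imp_nabla_of_cont by blast

end
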